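(* For real $r$, the generalized logarithmic mean $L_r$ is stable if and only if $r\in\{-2,-\tfrac12,1\}$ (in which cases $L_{-2}=B_0$, $L_{-1/2}=B_{1/2}$, $L_1=B_1$).
   Context: For $s,t>0$, $s\ne t$: $L_r(s,t)=\big(\frac{t^{r+1}-s^{r+1}}{(r+1)(t-s)}\big)^{1/r}$ for $r\ne-1,0$; $L_{-1}(s,t)=\frac{t-s}{\log t-\log s}$; $L_0(s,t)=\frac1e\big(t^t/s^s\big)^{1/(t-s)}$; $L_r(s,s)=s$. Power mean: $B_r(s,t)=\big(\frac{s^r+t^r}2\big)^{1/r}$ for $r\ne0$, $B_0(s,t)=\sqrt{st}$. A mean $M$ is stable if $M(s,t)=M\big(M(s,M(s,t)),M(M(s,t),t)\big)$ for all $s,t>0$. *)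

theory Defs
  imports Complex_Main
begin

definition genLogMean :: "real \<Rightarrow> real \<Rightarrow> real \<Rightarrow> real" where
  "genLogMean r s t =
     (if s = t then s
      else if r = -1 then (t - s) / (ln t - ln s)
      else if r = 0 then exp (-1) * ((t powr t / s powr s) powr (1 / (t - s)))
      else ((t powr (r + 1) - s powr (r + 1)) / ((r + 1) * (t - s))) powr (1 / r))"

definition powerMean :: "real \<Rightarrow> real \<Rightarrow> real \<Rightarrow> real" where
  "powerMean r s t =
     (if r = 0 then sqrt (s * t) else ((s powr r + t powr r) / 2) powr (1 / r))"

definition stable_mean :: "(real \<Rightarrow> real \<Rightarrow> real) \<Rightarrow> bool" where
  "stable_mean M \<longleftrightarrow>
     (\<forall>s t. s > 0 \<longrightarrow> t > 0 \<longrightarrow> M s t = M (M s (M s t)) (M (M s t) t))"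

end

theory Submission
  imports Defs "HOL-Library.Landau_Symbols" "HOL-Real_Asymp.Real_Asymp"
begin

text \<open>
  Write s = exp (c - d) and t = exp (c + d). Then L_r(s, t) = exp (c + H d) for an even
  profile H with H d = \<alpha> d^2 + \<beta> d^4 + O(d^6), where \<alpha> = (r + 2)/6 and
  \<beta> = -((r + 1)^2 + 1)(r + 2)/180. Stability of L_r becomes a functional equation for H,
  and comparing the coefficients of u^4 on its two sides forces 3\<beta> = -2\<alpha>^3, that is
  (r + 2)(2r + 1)(r - 1) = 0. Conversely, for these three values L_r is a power mean, and
  every power mean is stable because it is conjugate to the arithmetic mean.
\<close>

lemma bigo_const_mult:
  fixes f :: "'a \<Rightarrow> real"
  shows "f \<in> O[F](g) \<Longrightarrow> (\<lambda>x. c * f x) \<in> O[F](g)"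
  by (cases "c = 0") auto

lemma bigo_power_mult:
  fixes f g :: "real \<Rightarrow> real"
  assumes "f \<in> O[F](\<lambda>u. u^a)" "g \<in> O[F](\<lambda>u. u^b)" "a + b = c"
  shows "(\<lambda>u. f u * g u) \<in> O[F](\<lambda>u. u^c)"
  unfolding assms(3)[symmetric] power_add using landau_o.big_mult[OF assms(1,2)] .

lemma bigo_power_power:
  fixes f :: "real \<Rightarrow> real"
  assumes "f \<in> O[F](\<lambda>u. u^a)"
  shows "(\<lambda>u. f u ^ n) \<in> O[F](\<lambda>u. u^(a*n))"
  using landau_o.big_power[OF assms, of n] by (simp add: power_mult)

lemma bigo_power_mono:
  assumes "a \<le> b" "f \<in> O[at 0](\<lambda>u::real. u^b)"
  shows "f \<in> O[at 0](\<lambda>u. u^a)"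
proof -
  have "eventually (\<lambda>u::real. \<bar>u\<bar> < 1) (at 0)"
    using eventually_at[of "\<lambda>u::real. \<bar>u\<bar> < 1" 0 UNIV] by force
  then have "eventually (\<lambda>u::real. norm (u^b) \<le> 1 * norm (u^a)) (at 0)"
    by eventually_elim (use \<open>a \<le> b\<close> in \<open>auto simp: power_abs intro: power_decreasing\<close>)
  then have "(\<lambda>u::real. u^b) \<in> O[at 0](\<lambda>u. u^a)"
    by (intro landau_o.bigI[of 1]) auto
  with assms(2) show ?thesis by (rule landau_o.big_trans)
qed

lemma bigo_power_tendsto_zero:
  assumes "f \<in> O[at 0](\<lambda>u::real. u^k)" "k \<ge> 1"
  shows "(f \<longlongrightarrow> 0) (at 0)"
proof -
  have "((\<lambda>u::real. u^k) \<longlongrightarrow> 0) (at 0)"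
    using assms(2) by (auto intro!: tendsto_eq_intros)
  then have "(\<lambda>u::real. u^k) \<in> o[at 0](\<lambda>_. 1)"
    by (intro smalloI_tendsto) auto
  with assms(1) have "f \<in> o[at 0](\<lambda>_. 1)" by (rule landau_o.big_small_trans)
  then show ?thesis using smalloD_tendsto by fastforce
qed

lemma bigo_at_cong:
  fixes a :: "'a::t1_space"
  assumes "\<And>x. x \<noteq> a \<Longrightarrow> f x = g x" "g \<in> O[at a](h)"
  shows "f \<in> O[at a](h)"
proof -
  have "eventually (\<lambda>x. g x = f x) (at a)"
    using eventually_neq_at_within[of a a UNIV] by eventually_elim (simp add: assms(1))
  with assms(2) show ?thesis using landau_o.big.in_cong by blast
qed

lemma bigo_at_imp_bigo_nhds:
  fixes R :: "real \<Rightarrow> real"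
  assumes "R \<in> O[at 0](g)" "R 0 = 0"
  shows "R \<in> O[nhds 0](g)"
proof -
  from landau_o.bigE[OF assms(1)] obtain c where
    "c > 0" "eventually (\<lambda>x. norm (R x) \<le> c * norm (g x)) (at 0)" by blast
  then have "eventually (\<lambda>x. norm (R x) \<le> c * norm (g x)) (nhds 0)"
    using assms(2) unfolding eventually_at_filter by (auto elim: eventually_mono)
  with \<open>c > 0\<close> show ?thesis by (rule landau_o.bigI)
qed

lemma bigo_power_compose:
  fixes R g :: "real \<Rightarrow> real"
  assumes "R \<in> O[nhds 0](\<lambda>x. x^k)" "g \<in> O[at 0](\<lambda>u. u^1)" "(g \<longlongrightarrow> 0) (at 0)"
  shows "(\<lambda>u. R (g u)) \<in> O[at 0](\<lambda>u. u^k)"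
proof -
  have "(\<lambda>u. R (g u)) \<in> O[at 0](\<lambda>u. (g u)^k)"
    using landau_o.big.compose[OF assms(1,3)] .
  moreover have "(\<lambda>u. (g u)^k) \<in> O[at 0](\<lambda>u. u^k)"
    using landau_o.big_power[OF assms(2), of k] by (simp add: power_mult)
  ultimately show ?thesis by (rule landau_o.big_trans)
qed

lemma bigo_tendsto_if_near_half:
  fixes g :: "real \<Rightarrow> real"
  assumes "(\<lambda>u. g u - u/2) \<in> O[at 0](\<lambda>u. u^2)"
  shows "g \<in> O[at 0](\<lambda>u. u^1)" and "(g \<longlongrightarrow> 0) (at 0)"
proof -
  have "(\<lambda>u. u/2 + (g u - u/2)) \<in> O[at 0](\<lambda>u. u^1)"
    by (intro sum_in_bigo bigo_power_mono[OF _ assms]) auto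
  then show g: "g \<in> O[at 0](\<lambda>u. u^1)" by simp
  show "(g \<longlongrightarrow> 0) (at 0)" by (rule bigo_power_tendsto_zero[OF g]) simp
qed

lemma power_coeff_eq_0_if_bigo:
  assumes "(\<lambda>u::real. c * u^k) \<in> O[at 0](\<lambda>u. u^(Suc k))"
  shows "c = 0"
proof -
  from landau_o.bigE[OF assms] obtain K where
    K: "eventually (\<lambda>x. norm (c * x^k) \<le> K * norm (x^(Suc k))) (at 0)" by blast
  have "eventually (\<lambda>x::real. \<bar>c\<bar> \<le> K * \<bar>x\<bar>) (at 0)"
    using K eventually_neq_at_within[of 0 0 UNIV]
  proof eventually_elim
    case (elim x)
    then have "\<bar>c\<bar> * \<bar>x\<bar>^k \<le> (K * \<bar>x\<bar>) * \<bar>x\<bar>^k"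
      by (simp add: abs_mult power_abs mult_ac)
    with elim show ?case by simp
  qed
  moreover have "((\<lambda>x::real. K * \<bar>x\<bar>) \<longlongrightarrow> 0) (at 0)"
    by (auto intro!: tendsto_eq_intros)
  ultimately have "\<bar>c\<bar> \<le> 0"
    by (intro tendsto_le[of "at (0::real)" "\<lambda>x. K * \<bar>x\<bar>" 0 "\<lambda>_. \<bar>c\<bar>"]) auto
  then show ?thesis by simp
qed

locale quartic_expansion =
  fixes H :: "real \<Rightarrow> real" and \<alpha> \<beta> :: real
  assumes H_0: "H 0 = 0"
    and expansion: "(\<lambda>x. H x - \<alpha>*x^2 - \<beta>*x^4) \<in> O[at 0](\<lambda>x. x^6)"
begin

definition rem :: "real \<Rightarrow> real" where
  "rem x = H x - \<alpha>*x^2 - \<beta>*x^4"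

lemma H_eq_rem: "H x = \<alpha>*x^2 + \<beta>*x^4 + rem x"
  by (simp add: rem_def)

lemma rem_bigo: "rem \<in> O[at 0](\<lambda>x. x^6)"
  using expansion by (simp add: rem_def[abs_def])

lemma rem_near_half_bigo:
  assumes "(\<lambda>u. g u - u/2) \<in> O[at 0](\<lambda>u. u^2)"
  shows "(\<lambda>u. rem (g u)) \<in> O[at 0](\<lambda>u. u^6)"
proof -
  have "rem \<in> O[nhds 0](\<lambda>x. x^6)"
    by (rule bigo_at_imp_bigo_nhds[OF rem_bigo]) (simp add: rem_def H_0)
  then show ?thesis by (rule bigo_power_compose[OF _ bigo_tendsto_if_near_half[OF assms]])
qed

lemma H_sub_quadratic_bigo: "(\<lambda>u. H u - \<alpha>*u^2) \<in> O[at 0](\<lambda>u. u^4)"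
proof -
  have "(\<lambda>u. \<beta>*u^4 + rem u) \<in> O[at 0](\<lambda>u. u^4)"
    by (intro sum_in_bigo bigo_const_mult bigo_power_mono[OF _ rem_bigo]) auto
  then show ?thesis by (simp add: H_eq_rem)
qed

lemma H_bigo: "H \<in> O[at 0](\<lambda>u. u^2)"
proof -
  have "(\<lambda>u. \<alpha>*u^2 + (H u - \<alpha>*u^2)) \<in> O[at 0](\<lambda>u. u^2)"
    by (intro sum_in_bigo bigo_const_mult bigo_power_mono[OF _ H_sub_quadratic_bigo]) auto
  then show ?thesis by simp
qed

lemma rem_half_gaps_bigo:
  "(\<lambda>u. rem ((u + H u)/2)) \<in> O[at 0](\<lambda>u. u^6)"
  "(\<lambda>u. rem ((u - H u)/2)) \<in> O[at 0](\<lambda>u. u^6)"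
  using bigo_const_mult[OF H_bigo, of "1/2"] bigo_const_mult[OF H_bigo, of "-1/2"]
  by (auto intro!: rem_near_half_bigo simp: field_simps)

lemma half_gap_diff_bigo:
  "(\<lambda>u. H ((u - H u)/2) - H ((u + H u)/2) + \<alpha>^2*u^3) \<in> O[at 0](\<lambda>u. u^5)"
proof -
  have *: "H ((u - H u)/2) - H ((u + H u)/2) + \<alpha>^2*u^3
      = - \<alpha> * (u * (H u - \<alpha>*u^2)) - \<beta>/2 * (u * H u * (u^2 + (H u)^2))
        + rem ((u - H u)/2) - rem ((u + H u)/2)" for u
    unfolding H_eq_rem[of "(u - H u)/2"] H_eq_rem[of "(u + H u)/2"]
    by (simp add: field_simps power2_eq_square power4_eq_xxxx power3_eq_cube)
  have "(\<lambda>u. u * (H u - \<alpha>*u^2)) \<in> O[at 0](\<lambda>u. u^5)"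
    by (rule bigo_power_mult[OF _ H_sub_quadratic_bigo]) auto
  moreover have "(\<lambda>u. u * H u * (u^2 + (H u)^2)) \<in> O[at 0](\<lambda>u. u^5)"
  proof -
    have "(\<lambda>u. u * H u) \<in> O[at 0](\<lambda>u. u^3)"
      by (rule bigo_power_mult[OF _ H_bigo]) auto
    moreover have "(\<lambda>u. u^2 + (H u)^2) \<in> O[at 0](\<lambda>u. u^2)"
      by (intro sum_in_bigo bigo_power_mono[OF _ bigo_power_power[OF H_bigo]]) auto
    ultimately show ?thesis by (rule bigo_power_mult) simp
  qed
  ultimately show ?thesis
    unfolding * using rem_half_gaps_bigo bigo_power_mono[of 5 6]
    by (intro sum_in_bigo bigo_const_mult) auto
qed
lemma coefficient_relation:
  assumes eq: "\<And>u. H u = H ((u + H u)/2) + H ((u - H u)/2)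
                 + 2 * H ((u + H ((u - H u)/2) - H ((u + H u)/2))/2)"
  shows "3*\<beta> = -2*\<alpha>^3"
proof -
  define \<delta> where "\<delta> u = H ((u - H u)/2) - H ((u + H u)/2)" for u
  define D where "D u = (u + \<delta> u)/2" for u
  \<comment> \<open>The stability equation with every value of H expanded as \<open>\<alpha> x\<^sup>2 + \<beta> x\<^sup>4 + rem x\<close>;
     each summand on the right is \<open>O(u\<^sup>6)\<close>.\<close>
  have defect: "(3*\<beta>/4 + \<alpha>^3/2) * u^4
      = - rem u + \<alpha>/2 * ((H u - \<alpha>*u^2) * (H u + \<alpha>*u^2))
        + \<beta>/8 * (6*u^2*(H u)^2 + (H u)^4) + rem ((u + H u)/2) + rem ((u - H u)/2)
        + \<alpha> * (u * (\<delta> u + \<alpha>^2*u^3) + (\<delta> u)^2/2)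
        + \<beta> * ((u * \<delta> u + (\<delta> u)^2/2) * ((D u)^2 + u^2/4)) + 2 * rem (D u)" for u
  proof -
    define a where "a = H ((u + H u)/2)"
    define b where "b = H ((u - H u)/2)"
    define c where "c = H (D u)"
    have h: "H u = a + b + 2*c"
      using eq[of u] by (simp add: a_def b_def c_def D_def \<delta>_def add_diff_eq)
    have d: "D u = (u + b - a)/2" by (simp add: D_def \<delta>_def a_def b_def)
    show ?thesis
      unfolding rem_def \<delta>_def a_def[symmetric] b_def[symmetric] c_def[symmetric]
      unfolding h d by (simp add: field_simps power2_eq_square power4_eq_xxxx power3_eq_cube)
  qed
  have \<delta>_5: "(\<lambda>u. \<delta> u + \<alpha>^2*u^3) \<in> O[at 0](\<lambda>u. u^5)"
    using half_gap_diff_bigo by (simp add: \<delta>_def[abs_def])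
  have \<delta>_3: "\<delta> \<in> O[at 0](\<lambda>u. u^3)"
  proof -
    have "(\<lambda>u. (\<delta> u + \<alpha>^2*u^3) - \<alpha>^2*u^3) \<in> O[at 0](\<lambda>u. u^3)"
      by (intro sum_in_bigo bigo_power_mono[OF _ \<delta>_5] bigo_const_mult) auto
    then show ?thesis by simp
  qed
  have D_half: "(\<lambda>u. D u - u/2) \<in> O[at 0](\<lambda>u. u^2)"
  proof -
    have "(\<lambda>u. 1/2 * \<delta> u) \<in> O[at 0](\<lambda>u. u^2)"
      by (intro bigo_const_mult bigo_power_mono[OF _ \<delta>_3]) auto
    then show ?thesis by (simp add: D_def add_divide_distrib)
  qed
  have "(\<lambda>u. (3*\<beta>/4 + \<alpha>^3/2) * u^4) \<in> O[at 0](\<lambda>u. u^6)"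
  proof -
    have "(\<lambda>u. (H u - \<alpha>*u^2) * (H u + \<alpha>*u^2)) \<in> O[at 0](\<lambda>u. u^6)"
      using H_bigo by (intro bigo_power_mult[OF H_sub_quadratic_bigo] sum_in_bigo bigo_const_mult) auto
    moreover have "(\<lambda>u. 6*u^2*(H u)^2 + (H u)^4) \<in> O[at 0](\<lambda>u. u^6)"
    proof (rule sum_in_bigo)
      show "(\<lambda>u. 6*u^2*(H u)^2) \<in> O[at 0](\<lambda>u. u^6)"
        using bigo_power_power[OF H_bigo, of 2]
        by (intro bigo_power_mult[where f = "\<lambda>u. 6*u^2" and a = 2]) (auto intro!: bigo_const_mult)
      show "(\<lambda>u. (H u)^4) \<in> O[at 0](\<lambda>u. u^6)"
        using bigo_power_power[OF H_bigo, of 4] by (intro bigo_power_mono[of 6 8]) auto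
    qed
    moreover have "(\<lambda>u. u * (\<delta> u + \<alpha>^2*u^3) + (\<delta> u)^2/2) \<in> O[at 0](\<lambda>u. u^6)"
      using bigo_power_power[OF \<delta>_3, of 2]
      by (intro sum_in_bigo bigo_power_mult[OF _ \<delta>_5] bigo_const_mult) auto
    moreover have "(\<lambda>u. (u * \<delta> u + (\<delta> u)^2/2) * ((D u)^2 + u^2/4)) \<in> O[at 0](\<lambda>u. u^6)"
    proof (rule bigo_power_mult[of _ _ 4 _ 2])
      show "(\<lambda>u. u * \<delta> u + (\<delta> u)^2/2) \<in> O[at 0](\<lambda>u. u^4)"
        using bigo_power_power[OF \<delta>_3, of 2]
        by (intro sum_in_bigo bigo_power_mult[OF _ \<delta>_3] bigo_const_mult bigo_power_mono[of 4 6]) auto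
      show "(\<lambda>u. (D u)^2 + u^2/4) \<in> O[at 0](\<lambda>u. u^2)"
        using bigo_power_power[OF bigo_tendsto_if_near_half(1)[OF D_half], of 2]
        by (intro sum_in_bigo bigo_const_mult) auto
    qed simp
    ultimately have "(\<lambda>u. - rem u + \<alpha>/2 * ((H u - \<alpha>*u^2) * (H u + \<alpha>*u^2))
        + \<beta>/8 * (6*u^2*(H u)^2 + (H u)^4) + rem ((u + H u)/2) + rem ((u - H u)/2)
        + \<alpha> * (u * (\<delta> u + \<alpha>^2*u^3) + (\<delta> u)^2/2)
        + \<beta> * ((u * \<delta> u + (\<delta> u)^2/2) * ((D u)^2 + u^2/4)) + 2 * rem (D u))
        \<in> O[at 0](\<lambda>u. u^6)"
      using rem_bigo rem_half_gaps_bigo rem_near_half_bigo[OF D_half]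
      by - (assumption | rule sum_in_bigo bigo_const_mult landau_o.big.uminus_in_iff[THEN iffD2])+
    then show ?thesis by (simp only: defect)
  qed
  then have "(\<lambda>u. (3*\<beta>/4 + \<alpha>^3/2) * u^4) \<in> O[at 0](\<lambda>u. u^Suc 4)"
    by (rule bigo_power_mono[rotated]) simp
  then have "3*\<beta>/4 + \<alpha>^3/2 = 0" by (rule power_coeff_eq_0_if_bigo)
  then show ?thesis by simp
qed

end

lemma sinh_div_pos: "x \<noteq> 0 \<Longrightarrow> sinh x / x > (0::real)"
  by (cases "x > 0") (auto intro: divide_pos_pos divide_neg_neg simp: sinh_real_pos_iff sinh_real_neg_iff)

definition logMeanProfile :: "real \<Rightarrow> real \<Rightarrow> real" where
  "logMeanProfile r d =
     (if d = 0 then 0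
      else if r = -1 then ln (sinh d / d)
      else if r = 0 then d * cosh d / sinh d - 1
      else ln (sinh ((r + 1) * d) / ((r + 1) * sinh d)) / r)"

lemma genLogMean_exp_center:
  "genLogMean r (exp (c - d)) (exp (c + d)) = exp (c + logMeanProfile r d)"
proof (cases "d = 0")
  case True
  then show ?thesis by (simp add: genLogMean_def logMeanProfile_def)
next
  case d: False
  have ne: "exp (c - d) \<noteq> exp (c + d)" using d by simp
  have sinh_d: "sinh d \<noteq> 0" using d by simp
  have gap: "exp (c + d) - exp (c - d) = 2 * exp c * sinh d"
    by (simp add: sinh_def exp_add exp_diff exp_minus field_simps)
  consider "r = -1" | "r = 0" | "r \<noteq> -1" "r \<noteq> 0" by blast
  then show ?thesis
  proof cases
    case 1
    have "genLogMean r (exp (c - d)) (exp (c + d)) = exp c * (sinh d / d)"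
      using ne 1 d by (simp add: genLogMean_def gap)
    also have "\<dots> = exp (c + ln (sinh d / d))"
      using sinh_div_pos[OF d] by (simp add: exp_add)
    finally show ?thesis using 1 d by (simp add: logMeanProfile_def)
  next
    case 2
    have sum: "exp (c + d) + exp (c - d) = 2 * exp c * cosh d"
      by (simp add: cosh_def exp_add exp_diff exp_minus field_simps)
    have num: "exp (c + d) * (c + d) - exp (c - d) * (c - d)
        = c * (exp (c + d) - exp (c - d)) + d * (exp (c + d) + exp (c - d))"
      by (simp add: algebra_simps)
    have "(exp (c + d) * (c + d) - exp (c - d) * (c - d)) / (exp (c + d) - exp (c - d))
        = c + d * cosh d / sinh d"
      unfolding num gap sum using sinh_d by (simp add: field_simps)
    moreover have "genLogMean r (exp (c - d)) (exp (c + d)) =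
        exp (-1) * exp ((exp (c + d) * (c + d) - exp (c - d) * (c - d)) / (exp (c + d) - exp (c - d)))"
      using ne 2 by (simp add: genLogMean_def powr_def exp_diff[symmetric] field_simps)
    ultimately show ?thesis
      using 2 d by (simp add: logMeanProfile_def exp_add[symmetric])
  next
    case 3
    define p where "p = r + 1"
    have p: "p \<noteq> 0" using 3 by (simp add: p_def)
    define Q where "Q = sinh (p * d) / (p * sinh d)"
    have "Q = (sinh (p * d) / (p * d)) / (sinh d / d)"
      using d p by (simp add: Q_def field_simps)
    also have "\<dots> > 0"
      using d p by (intro divide_pos_pos sinh_div_pos) auto
    finally have Q_pos: "Q > 0" .
    have "exp (c + d) powr p - exp (c - d) powr p = 2 * exp (p * c) * sinh (p * d)"
      by (simp add: powr_def sinh_def exp_add[symmetric] exp_diff[symmetric] field_simps)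
    moreover have "exp (p * c) = exp (r * c) * exp c"
      by (simp add: p_def exp_add[symmetric] algebra_simps)
    ultimately have "(exp (c + d) powr p - exp (c - d) powr p) / (p * (exp (c + d) - exp (c - d)))
        = exp (r * c) * Q"
      using p sinh_d by (simp add: gap Q_def)
    then have "genLogMean r (exp (c - d)) (exp (c + d)) = (exp (r * c) * Q) powr (1 / r)"
      using ne 3 by (simp add: genLogMean_def p_def)
    also have "\<dots> = exp (c + ln Q / r)"
      using Q_pos 3 by (simp add: powr_def ln_mult field_simps)
    finally show ?thesis using 3 d by (simp add: logMeanProfile_def Q_def p_def)
  qed
qed

lemma quartic_expansion_logMeanProfile:
  "quartic_expansion (logMeanProfile r) ((r + 2)/6) (-((r + 1)^2 + 1) * (r + 2)/180)"
proof
  show "logMeanProfile r 0 = 0" by (simp add: logMeanProfile_def)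
  define E where "E v = ln (sinh v / v) - v^2/6 + v^4/180" for v :: real
  have E: "E \<in> O[at 0](\<lambda>v. v^6)"
    unfolding E_def by real_asymp
  consider "r = -1" | "r = 0" | "r \<noteq> -1" "r \<noteq> 0" by blast
  then show "(\<lambda>x. logMeanProfile r x - (r + 2)/6 * x^2 - (-((r + 1)^2 + 1) * (r + 2)/180) * x^4)
      \<in> O[at 0](\<lambda>x. x^6)"
  proof cases
    case 1
    show ?thesis by (rule bigo_at_cong[OF _ E]) (simp add: logMeanProfile_def E_def 1)
  next
    case 2
    have "(\<lambda>x::real. x * cosh x / sinh x - 1 - x^2/3 + x^4/45) \<in> O[at 0](\<lambda>x. x^6)"
      by real_asymp
    then show ?thesis by (rule bigo_at_cong[rotated]) (simp add: logMeanProfile_def 2)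
  next
    case 3
    define p where "p = r + 1"
    have p: "p \<noteq> 0" using 3 by (simp add: p_def)
    have "(\<lambda>x. E (p * x)) \<in> O[at 0](\<lambda>x. x^6)"
    proof (rule bigo_power_compose[where R = E and g = "\<lambda>x. p * x"])
      show "E \<in> O[nhds 0](\<lambda>x. x^6)" \<comment> \<open>\<open>E 0 = ln 0 = 0\<close> by HOL's junk values\<close>
        by (rule bigo_at_imp_bigo_nhds[OF E]) (simp add: E_def)
    qed (auto intro!: bigo_const_mult tendsto_eq_intros)
    then have "(\<lambda>x. 1/r * (E (p * x) - E x)) \<in> O[at 0](\<lambda>x. x^6)"
      by (intro bigo_const_mult sum_in_bigo E)
    then show ?thesis
    proof (rule bigo_at_cong[rotated])
      fix x :: real assume x: "x \<noteq> 0"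
      have q: "sinh (p * x) / (p * sinh x) = (sinh (p * x) / (p * x)) / (sinh x / x)"
        using x p by (simp add: field_simps)
      have "ln (sinh (p * x) / (p * sinh x)) = ln (sinh (p * x) / (p * x)) - ln (sinh x / x)"
        unfolding q using x p by (intro ln_divide_pos sinh_div_pos) auto
      then have "logMeanProfile r x = (ln (sinh (p * x) / (p * x)) - ln (sinh x / x)) / r"
        using x 3 by (simp add: logMeanProfile_def p_def)
      then show "logMeanProfile r x - (r + 2)/6 * x^2 - (-((r + 1)^2 + 1) * (r + 2)/180) * x^4
          = 1/r * (E (p * x) - E x)"
        using 3 by (simp add: E_def p_def field_simps power2_eq_square power4_eq_xxxx)
    qed
  qed
qed

lemma stable_mean_profile_equation:
  assumes "stable_mean M"
    and M_exp: "\<And>c d. M (exp (c - d)) (exp (c + d)) = exp (c + H d)"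
  shows "H u = H ((u + H u)/2) + H ((u - H u)/2)
              + 2 * H ((u + H ((u - H u)/2) - H ((u + H u)/2))/2)"
proof -
  have M_exp': "M (exp a) (exp b) = exp ((a + b)/2 + H ((b - a)/2))" for a b
    using M_exp[of "(a + b)/2" "(b - a)/2"] by (simp add: field_simps)
  define a where "a = (H u - u)/2 + H ((u + H u)/2)"
  define b where "b = (u + H u)/2 + H ((u - H u)/2)"
  have "M (exp (-u)) (exp u) = exp (H u)"
    using M_exp'[of "-u" u] by simp
  moreover have "M (exp (-u)) (exp (H u)) = exp a" "M (exp (H u)) (exp u) = exp b"
    using M_exp'[of "-u" "H u"] M_exp'[of "H u" u] by (simp_all add: a_def b_def add.commute)
  ultimately have "exp (H u) = M (exp a) (exp b)"
    using \<open>stable_mean M\<close> unfolding stable_mean_def by (metis exp_gt_zero)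
  then have "H u = (a + b)/2 + H ((b - a)/2)"
    by (simp add: M_exp')
  moreover have "(b - a)/2 = (u + H ((u - H u)/2) - H ((u + H u)/2))/2"
    by (simp add: a_def b_def field_simps)
  ultimately have "H u = (a + b)/2 + H ((u + H ((u - H u)/2) - H ((u + H u)/2))/2)"
    by simp
  then show ?thesis
    unfolding a_def b_def by (simp add: field_simps)
qed

lemma stable_mean_if_quasi_arithmetic:
  fixes f :: "real \<Rightarrow> real"
  assumes pos: "\<And>s t. 0 < s \<Longrightarrow> 0 < t \<Longrightarrow> 0 < M s t"
    and inj: "inj_on f {0<..}"
    and mean: "\<And>s t. 0 < s \<Longrightarrow> 0 < t \<Longrightarrow> f (M s t) = (f s + f t)/2"
  shows "stable_mean M"
  unfolding stable_mean_def
proof (intro allI impI)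
  fix s t :: real assume s: "0 < s" and t: "0 < t"
  define m where "m = M s t"
  have m: "0 < m" using pos[OF s t] by (simp add: m_def)
  have "f (M (M s m) (M m t)) = ((f s + f m)/2 + (f m + f t)/2)/2"
    using s t m by (simp add: mean pos)
  also have "\<dots> = f m"
    using mean[OF s t] by (simp add: m_def field_simps)
  finally show "M s t = M (M s (M s t)) (M (M s t) t)"
    using inj s t m by (auto simp: m_def pos dest: inj_onD)
qed

lemma powerMean_pos:
  assumes "0 < s" "0 < t" shows "0 < powerMean p s t"
proof -
  have "0 < s powr p + t powr p" using assms by (simp add: add_pos_pos)
  then show ?thesis using assms by (simp add: powerMean_def)
qed

lemma stable_mean_powerMean: "stable_mean (powerMean p)"
proof (cases "p = 0")
  case True
  show ?thesis
  proof (rule stable_mean_if_quasi_arithmetic[where f = ln])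
    show "inj_on (ln :: real \<Rightarrow> real) {0<..}" by (rule inj_on_inverseI[where g = exp]) auto
    show "ln (powerMean p s t) = (ln s + ln t)/2" if "0 < s" "0 < t" for s t
      using that True by (simp add: powerMean_def ln_sqrt ln_mult)
  qed (fact powerMean_pos)
next
  case False
  show ?thesis
  proof (rule stable_mean_if_quasi_arithmetic[where f = "\<lambda>x. x powr p"])
    show "inj_on (\<lambda>x. x powr p) {0<..}"
      by (rule inj_on_inverseI[where g = "\<lambda>y. y powr (1/p)"]) (use False in \<open>simp add: powr_powr\<close>)
    show "powerMean p s t powr p = (s powr p + t powr p)/2" if "0 < s" "0 < t" for s t
      using that False by (simp add: powerMean_def powr_powr add_pos_pos)
  qed (fact powerMean_pos)
qed

lemma stable_mean_cong:
  assumes "\<And>s t. 0 < s \<Longrightarrow> 0 < t \<Longrightarrow> M s t = N s t"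
    and "\<And>s t. 0 < s \<Longrightarrow> 0 < t \<Longrightarrow> 0 < N s t"
  shows "stable_mean M \<longleftrightarrow> stable_mean N"
  using assms by (simp add: stable_mean_def)

lemma genLogMean_eq_powr:
  "s \<noteq> t \<Longrightarrow> r \<noteq> -1 \<Longrightarrow> r \<noteq> 0 \<Longrightarrow>
    genLogMean r s t = ((t powr (r + 1) - s powr (r + 1)) / ((r + 1) * (t - s))) powr (1 / r)"
  by (simp add: genLogMean_def)

lemma genLogMean_one:
  assumes "0 < s" "0 < t" shows "genLogMean 1 s t = powerMean 1 s t"
proof (cases "s = t")
  case False
  have mid: "(t powr (1 + 1) - s powr (1 + 1)) / ((1 + 1) * (t - s)) = (s + t)/2"
    using assms False by (simp add: power2_eq_square field_simps)
  have "genLogMean 1 s t = ((s + t)/2) powr (1/1)"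
    using genLogMean_eq_powr[OF False, of 1] unfolding mid by simp
  then show ?thesis
    using assms by (simp add: powerMean_def)
qed (use assms in \<open>simp add: genLogMean_def powerMean_def\<close>)

lemma genLogMean_minus_two:
  assumes "0 < s" "0 < t" shows "genLogMean (-2) s t = powerMean 0 s t"
proof (cases "s = t")
  case False
  have "(t powr (-2 + 1) - s powr (-2 + 1)) / ((-2 + 1) * (t - s)) = inverse (s * t)"
    using assms False by (simp add: powr_minus field_simps)
  then have "genLogMean (-2) s t = inverse (s * t) powr (1 / -2)"
    using genLogMean_eq_powr[OF False] by simp
  also have "\<dots> = inverse (inverse (s * t) powr (1/2))"
    by (simp add: powr_minus[symmetric])
  also have "\<dots> = inverse (inverse ((s * t) powr (1/2)))"
    using assms by (subst inverse_powr) auto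
  also have "\<dots> = sqrt (s * t)"
    using assms by (simp add: powr_half_sqrt)
  finally show ?thesis by (simp add: powerMean_def)
qed (use assms in \<open>simp add: genLogMean_def powerMean_def\<close>)

lemma genLogMean_minus_half:
  assumes "0 < s" "0 < t" shows "genLogMean (-1/2) s t = powerMean (1/2) s t"
proof -
  have pos: "0 < sqrt s + sqrt t" using assms by (simp add: add_pos_pos)
  have "powerMean (1/2) s t = ((sqrt s + sqrt t)/2)^2"
    using assms pos by (simp add: powerMean_def powr_half_sqrt powr_numeral)
  moreover have "genLogMean (-1/2) s t = ((sqrt s + sqrt t)/2)^2"
  proof (cases "s = t")
    case False
    have ne: "sqrt t - sqrt s \<noteq> 0" using False assms by simp
    have ts: "t - s = (sqrt t - sqrt s) * (sqrt t + sqrt s)"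
      using assms by (simp add: algebra_simps flip: power2_eq_square)
    have "(t powr (-1/2 + 1) - s powr (-1/2 + 1)) / ((-1/2 + 1) * (t - s))
        = 2 / (sqrt s + sqrt t)"
      unfolding ts using assms ne pos
      by (simp add: powr_half_sqrt divide_simps) (simp add: ac_simps)
    then have "genLogMean (-1/2) s t = (2 / (sqrt s + sqrt t)) powr (1 / (-1/2))"
      using genLogMean_eq_powr[OF False] by simp
    also have "\<dots> = inverse ((2 / (sqrt s + sqrt t)) powr 2)"
      by (simp add: powr_minus[symmetric])
    also have "\<dots> = ((sqrt s + sqrt t)/2)^2"
      using pos by (simp add: powr_numeral power_divide)
    finally show ?thesis .
  qed (use assms in \<open>simp add: genLogMean_def power2_eq_square\<close>)
  ultimately show ?thesis by simp
qed

lemma stable_mean_genLogMean_iff: "stable_mean (genLogMean r) \<longleftrightarrow> r \<in> {-2, -1/2, 1}"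
proof
  assume st: "stable_mean (genLogMean r)"
  interpret quartic_expansion "logMeanProfile r" "(r + 2)/6" "-((r + 1)^2 + 1) * (r + 2)/180"
    by (rule quartic_expansion_logMeanProfile)
  have "3 * (-((r + 1)^2 + 1) * (r + 2)/180) = -2 * ((r + 2)/6)^3"
    by (rule coefficient_relation[OF stable_mean_profile_equation[OF st genLogMean_exp_center]])
  then have "(r + 2) * (2*r + 1) * (r - 1) = 0"
    by (simp add: field_simps power2_eq_square power3_eq_cube)
  then show "r \<in> {-2, -1/2, 1}" by auto
next
  assume "r \<in> {-2, -1/2, 1}"
  then obtain p where L_eq: "\<And>s t. 0 < s \<Longrightarrow> 0 < t \<Longrightarrow> genLogMean r s t = powerMean p s t"
    using genLogMean_minus_two genLogMean_minus_half genLogMean_one by auto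
  have "stable_mean (genLogMean r) \<longleftrightarrow> stable_mean (powerMean p)"
    by (rule stable_mean_cong[OF L_eq powerMean_pos])
  then show "stable_mean (genLogMean r)"
    using stable_mean_powerMean by simp
qed

theorem mainTheorem15:
  fixes r :: real
  shows "(stable_mean (genLogMean r) \<longleftrightarrow> r \<in> {-2, -1/2, 1})
    \<and> (\<forall>s>0. \<forall>t>0. genLogMean (-2) s t = powerMean 0 s t)
    \<and> (\<forall>s>0. \<forall>t>0. genLogMean (-1/2) s t = powerMean (1/2) s t)
    \<and> (\<forall>s>0. \<forall>t>0. genLogMean 1 s t = powerMean 1 s t)"
  using stable_mean_genLogMean_iff genLogMean_minus_two genLogMean_minus_half genLogMean_one
  by simp

end
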